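(* Let $A\in\mathrm{GL}(\mathcal S)$, let $\varepsilon_A\in\mathrm{Inv}(\mathcal S)$ be the unique element with $\varepsilon_A\circ A(\Delta_0)=\Delta_0$, and let $\sigma\in S_6$ be the permutation with $\varepsilon_A\circ A(\mathfrak p_i)=\mathfrak p_{\sigma(i)}$ for $i=1,\dots,6$. Then for every $1\le i\le6$, $$A\circ\varepsilon^{(i)}=\varepsilon^{(\sigma(i))}\circ A .$$
   Context: Work over an algebraically closed field of characteristic $\neq2$. $F(X)=\sum_{i=0}^6f_iX^i$, $f_6\neq0$, distinct roots $\theta_1,\dots,\theta_6$. $P_j(X)=\prod_{i\ne j}(X-\theta_i)$, $\omega_j=P_j(\theta_j)$. Points of $\mathbb P^5$ are identified with $P(X)=\sum_{j=0}^5p_jX^j$; $\pi_j=P(\theta_j)/\omega_j$. $\mathcal S\subset\mathbb P^5$ is defined by $\sum_j\theta_j^i\omega_j\pi_j^2=0$, $i=0,1,2$. $\varepsilon^{(i)}$ is the involution $\pi_j\mapsto(-1)^{\delta_{ij}}\pi_j$; $\mathrm{Inv}(\mathcal S)$ is the commutative group of order 32 generated by them. $\Delta_0=\{(p_0:p_1:0:0:0:0)\}$, $\Delta_i=\varepsilon^{(i)}(\Delta_0)$, $\Delta_{ij}=\varepsilon^{(i)}\varepsilon^{(j)}(\Delta_0)$, $\Delta_{ijk}=\varepsilon^{(i)}\varepsilon^{(j)}\varepsilon^{(k)}(\Delta_0)$; these 32 lines are all the lines on $\mathcal S$, and $\mathrm{Inv}(\mathcal S)$ permutes them simply transitively. $\mathfrak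 p_i=\Delta_0\cap\Delta_i=(-\theta_i:1:0:0:0:0)$; these are the only points of $\Delta_0$ lying on another line of $\mathcal S$. $\mathrm{GL}(\mathcal S)$ is the group of automorphisms of $\mathcal S$ which are restrictions of projective linear transformations of $\mathbb P^5$. *)

theory Defs
  imports "HOL-Computational_Algebra.Polynomial" "HOL-Combinatorics.Permutations"
begin

text \<open>Points of P^5 are represented by nonzero polynomials P of degree at most 5
  (P(X) = sum p_j X^j), up to nonzero scalar multiples. The roots of F are
  theta 1, ..., theta 6.\<close>

definition V5 :: "'a::field poly set" where
  "V5 = {P. degree P \<le> 5}"

definition Delta0 :: "'a::field poly set" where
  "Delta0 = {P. degree P \<le> 1}"  \<comment> \<open>linear span of the line (p0:p1:0:0:0:0)\<close>

definition Pj :: "(nat \<Rightarrow> 'a::field) \<Rightarrow> nat \<Rightarrow> 'a poly" where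
  "Pj \<theta> j = (\<Prod>i\<in>{1..6} - {j}. [:- \<theta> i, 1:])"

definition omega :: "(nat \<Rightarrow> 'a::field) \<Rightarrow> nat \<Rightarrow> 'a" where
  "omega \<theta> j = poly (Pj \<theta> j) (\<theta> j)"

definition piC :: "(nat \<Rightarrow> 'a::field) \<Rightarrow> 'a poly \<Rightarrow> nat \<Rightarrow> 'a" where
  "piC \<theta> P j = poly P (\<theta> j) / omega \<theta> j"

definition Scone :: "(nat \<Rightarrow> 'a::field) \<Rightarrow> 'a poly set" where
  "Scone \<theta> = {P. P \<noteq> 0 \<and> degree P \<le> 5 \<and>
     (\<forall>k<3. (\<Sum>j\<in>{1..6}. \<theta> j ^ k * omega \<theta> j * (piC \<theta> P j)^2) = 0)}"

text \<open>The involution of Inv(S) flipping the signs of the coordinates pi_i, i in I.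
  Since P = sum_j pi_j P_j (Lagrange interpolation), it is
  P - 2 sum_{i in I} pi_i P_i.\<close>
definition epsI :: "(nat \<Rightarrow> 'a::field) \<Rightarrow> nat set \<Rightarrow> 'a poly \<Rightarrow> 'a poly" where
  "epsI \<theta> I P = P - smult 2 (\<Sum>i\<in>I. smult (piC \<theta> P i) (Pj \<theta> i))"

definition eps :: "(nat \<Rightarrow> 'a::field) \<Rightarrow> nat \<Rightarrow> 'a poly \<Rightarrow> 'a poly" where
  "eps \<theta> i = epsI \<theta> {i}"

definition proj_eq :: "'a::field poly \<Rightarrow> 'a poly \<Rightarrow> bool" where
  "proj_eq P Q \<longleftrightarrow> (\<exists>c. c \<noteq> 0 \<and> P = smult c Q)"

definition GL_S :: "(nat \<Rightarrow> 'a::field) \<Rightarrow> ('a poly \<Rightarrow> 'a poly) \<Rightarrow> bool" where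
  "GL_S \<theta> M \<longleftrightarrow>
     (\<forall>P\<in>V5. \<forall>Q\<in>V5. M (P + Q) = M P + M Q) \<and>
     (\<forall>P\<in>V5. \<forall>c. M (smult c P) = smult c (M P)) \<and>
     bij_betw M V5 V5 \<and>
     M ` Scone \<theta> = Scone \<theta>"

end

theory Submission
  imports Defs
begin

(* Write pi_j(P) = P(theta_j)/omega_j for the Lagrange coordinates, so that
   P = sum_j pi_j(P) P_j for deg P <= 5, and S is cut out by the three diagonal quadrics
   beta_k(P,P) = sum_j theta_j^k omega_j pi_j(P)^2, k = 0,1,2.
   (1) The 32 "sign points" R_B = sum_j (+-1/omega_j) P_j lie on S (partial fractions).
   (2) A linear M preserving S maps them back into S; polarising over four sign patterns
       shows that the images M P_j are pairwise orthogonal for every beta_k.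
   (3) For each node a the form beta_1 - theta_a beta_0 has radical spanned by P_a.  Expanding
       a preimage of P_a in the basis M P_j forces one M P_b to be orthogonal to all M P_l,
       hence to lie in the radical: M P_b is a multiple of P_a.  Counting gives that every
       M P_i is a nonzero multiple of some P_a, and M then intertwines eps^(i) with eps^(a).
   (4) Finally a = sigma(i): pi_i vanishes at p_i = X - theta_i, hence pi_a vanishes at
       M p_i and at eps_A M p_i, which is proportional to X - theta_sigma(i). *)

section \<open>Lagrange coordinates\<close>

lemma Pj_root:
  assumes "j \<in> {1..6}" "i \<noteq> j"
  shows "poly (Pj \<theta> i) (\<theta> j) = 0"
proof -
  have "j \<in> {1..6} - {i}" using assms by auto
  then show ?thesis unfolding Pj_def poly_prod by (intro prod_zero) auto
qed

lemma Pj_degree_coeff: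
  assumes "i \<in> {1..6::nat}"
  shows "degree (Pj \<theta> i) = 5" and "coeff (Pj \<theta> i) 5 = (1::'a::field)"
proof -
  have "degree (Pj \<theta> i) = (\<Sum>k\<in>{1..6} - {i}. degree [:-\<theta> k, 1:])"
    unfolding Pj_def by (rule degree_prod_eq_sum_degree) simp
  also have "\<dots> = card ({1..6::nat} - {i})" by simp
  also have "\<dots> = 5" using assms by simp
  finally show d: "degree (Pj \<theta> i) = 5" .
  have "lead_coeff (Pj \<theta> i) = 1" unfolding Pj_def lead_coeff_prod by simp
  with d show "coeff (Pj \<theta> i) 5 = 1" by simp
qed

lemma Pj_V5: "i \<in> {1..6} \<Longrightarrow> Pj \<theta> i \<in> V5"
  by (simp add: V5_def Pj_degree_coeff)

lemma V5_smult: "P \<in> V5 \<Longrightarrow> smult c P \<in> V5"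
  by (simp add: V5_def order_trans[OF degree_smult_le])

lemma V5_lincomb:
  "(\<And>j. j \<in> J \<Longrightarrow> Q j \<in> V5) \<Longrightarrow> (\<Sum>j\<in>J. smult (c j) (Q j)) \<in> V5"
  unfolding V5_def mem_Collect_eq
  by (cases "finite J") (auto intro!: degree_sum_le intro: order_trans[OF degree_smult_le])

lemma piC_smult: "piC \<theta> (smult c Q) j = c * piC \<theta> Q j"
  by (simp add: piC_def)

lemma piC_diff: "piC \<theta> (P - Q) j = piC \<theta> P j - piC \<theta> Q j"
  by (simp add: piC_def diff_divide_distrib)

lemma piC_zero: "piC \<theta> 0 j = 0"
  by (simp add: piC_def)

lemma piC_lincomb:
  "piC \<theta> (\<Sum>j\<in>J. smult (c j) (Q j)) m = (\<Sum>j\<in>J. c j * piC \<theta> (Q j) m)"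
  by (simp add: piC_def poly_sum sum_divide_distrib)

locale six_nodes =
  fixes \<theta> :: "nat \<Rightarrow> 'a::field"
  assumes nodes_inj: "inj_on \<theta> {1..6}"
begin

lemma omega_nonzero:
  assumes "i \<in> {1..6}"
  shows "omega \<theta> i \<noteq> 0"
proof -
  have "poly [:- \<theta> k, 1:] (\<theta> i) \<noteq> 0" if "k \<in> {1..6} - {i}" for k
    using that assms inj_onD[OF nodes_inj, of i k] by auto
  then show ?thesis unfolding omega_def Pj_def poly_prod by (simp add: prod_zero_iff)
qed

lemma piC_Pj:
  assumes "i \<in> {1..6}" "j \<in> {1..6}"
  shows "piC \<theta> (Pj \<theta> i) j = (if i = j then 1 else 0)"
  using Pj_root[of j i \<theta>] omega_nonzero[OF assms(2)] assms
  by (auto simp: piC_def omega_def)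

lemma piC_basis_lincomb:
  assumes "m \<in> {1..6}"
  shows "piC \<theta> (\<Sum>j\<in>{1..6}. smult (c j) (Pj \<theta> j)) m = c m"
proof -
  have "piC \<theta> (\<Sum>j\<in>{1..6}. smult (c j) (Pj \<theta> j)) m = (\<Sum>j\<in>{1..6}. if j = m then c j else 0)"
    unfolding piC_lincomb using assms by (intro sum.cong refl) (simp add: piC_Pj)
  then show ?thesis using assms by simp
qed

lemma lagrange:
  assumes "P \<in> V5"
  shows "P = (\<Sum>j\<in>{1..6}. smult (piC \<theta> P j) (Pj \<theta> j))"
    (is "P = ?L")
proof (rule poly_eqI_degree[of "\<theta> ` {1..6}"])
  fix x assume "x \<in> \<theta> ` {1..6}"
  then obtain m where m: "m \<in> {1..6}" "x = \<theta> m" by auto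
  have "piC \<theta> P m = piC \<theta> ?L m" using piC_basis_lincomb[OF m(1)] by simp
  then show "poly P x = poly ?L x"
    using omega_nonzero[OF m(1)] m(2) by (simp add: piC_def)
next
  have card: "card (\<theta> ` {1..6}) = 6" using nodes_inj by (simp add: card_image)
  then show "degree P < card (\<theta> ` {1..6})" using assms by (simp add: V5_def)
  have "?L \<in> V5" by (intro V5_lincomb Pj_V5)
  then show "degree ?L < card (\<theta> ` {1..6})" using card by (simp add: V5_def)
qed

lemma V5_eq_zero_iff_coords:
  assumes "P \<in> V5"
  shows "P = 0 \<longleftrightarrow> (\<forall>j\<in>{1..6}. piC \<theta> P j = 0)"
  using lagrange[OF assms] by (auto simp: piC_zero)

lemma supported_at_node:
  assumes "U \<in> V5" "a \<in> {1..6}" "\<And>i. i \<in> {1..6} \<Longrightarrow> i \<noteq> a \<Longrightarrow> piC \<theta> U i = 0"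
  shows "U = smult (piC \<theta> U a) (Pj \<theta> a)"
proof -
  have "U = (\<Sum>i\<in>{1..6}. if i = a then smult (piC \<theta> U a) (Pj \<theta> a) else 0)"
    by (subst lagrange[OF assms(1)]) (intro sum.cong refl, auto simp: assms(3))
  then show ?thesis using assms(2) by simp
qed

text \<open>Partial fractions: comparing coefficients of \<open>X^5\<close> in the Lagrange expansion of \<open>X^k\<close>
  gives \<open>\<Sum>_j \<theta>_j^k / \<omega>_j = 0\<close> for \<open>k \<le> 4\<close>.\<close>
lemma partial_fractions:
  assumes "k \<le> 4"
  shows "(\<Sum>j\<in>{1..6}. \<theta> j ^ k / omega \<theta> j) = 0"
proof -
  have "monom 1 k \<in> V5" using assms by (simp add: V5_def degree_monom_eq)
  then have "coeff (monom 1 k) 5 = coeff (\<Sum>j\<in>{1..6}. smult (piC \<theta> (monom 1 k) j) (Pj \<theta> j)) 5"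
    using lagrange by metis
  also have "\<dots> = (\<Sum>j\<in>{1..6}. \<theta> j ^ k / omega \<theta> j)"
    by (simp add: coeff_sum Pj_degree_coeff piC_def poly_monom)
  finally show ?thesis using assms by simp
qed

lemma piC_epsI:
  assumes "I \<subseteq> {1..6}" "a \<in> {1..6}"
  shows "piC \<theta> (epsI \<theta> I R) a = (if a \<in> I then - piC \<theta> R a else piC \<theta> R a)"
proof -
  have "(\<Sum>m\<in>I. piC \<theta> R m * piC \<theta> (Pj \<theta> m) a) = (\<Sum>m\<in>I. if m = a then piC \<theta> R a else 0)"
    using assms by (intro sum.cong refl) (auto simp: piC_Pj)
  also have "\<dots> = (if a \<in> I then piC \<theta> R a else 0)"
    using finite_subset[OF assms(1)] by simp
  finally show ?thesis unfolding epsI_def piC_diff piC_smult piC_lincomb by simp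
qed

end

section \<open>Diagonal forms and the sign points\<close>

definition diag_form :: "(nat \<Rightarrow> 'a::field) \<Rightarrow> (nat \<Rightarrow> 'a) \<Rightarrow> 'a poly \<Rightarrow> 'a poly \<Rightarrow> 'a" where
  "diag_form \<theta> \<phi> P Q = (\<Sum>i\<in>{1..6}. \<phi> i * piC \<theta> P i * piC \<theta> Q i)"

definition quadric_weight :: "(nat \<Rightarrow> 'a::field) \<Rightarrow> nat \<Rightarrow> nat \<Rightarrow> 'a" where
  "quadric_weight \<theta> k i = \<theta> i ^ k * omega \<theta> i"

lemma Scone_iff:
  "P \<in> Scone \<theta> \<longleftrightarrow> P \<noteq> 0 \<and> P \<in> V5 \<and> (\<forall>k<3. diag_form \<theta> (quadric_weight \<theta> k) P P = 0)"
  by (simp add: Scone_def V5_def diag_form_def quadric_weight_def power2_eq_square mult.assoc)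

lemma diag_form_lincomb_right:
  "diag_form \<theta> \<phi> U (\<Sum>j\<in>J. smult (c j) (Q j)) = (\<Sum>j\<in>J. c j * diag_form \<theta> \<phi> U (Q j))"
  by (simp add: diag_form_def piC_lincomb sum_distrib_left sum_distrib_right mult_ac)
     (rule sum.swap)

lemma polarization:
  fixes \<phi> v a b :: "nat \<Rightarrow> 'a::idom"
  assumes "(2::'a) \<noteq> 0"
    and "(\<Sum>i\<in>S. \<phi> i * (v i)^2) = 0"
    and "(\<Sum>i\<in>S. \<phi> i * (v i - 2 * a i)^2) = 0"
    and "(\<Sum>i\<in>S. \<phi> i * (v i - 2 * b i)^2) = 0"
    and "(\<Sum>i\<in>S. \<phi> i * (v i - 2 * (a i + b i))^2) = 0"
  shows "(\<Sum>i\<in>S. \<phi> i * a i * b i) = 0"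
proof -
  have "8 * (\<Sum>i\<in>S. \<phi> i * a i * b i) =
      (\<Sum>i\<in>S. \<phi> i * (v i)^2 - \<phi> i * (v i - 2 * a i)^2 - \<phi> i * (v i - 2 * b i)^2
               + \<phi> i * (v i - 2 * (a i + b i))^2)"
    by (simp add: sum_distrib_left) (intro sum.cong refl, simp add: power2_eq_square algebra_simps)
  also have "\<dots> = 0"
    using assms(2-5) by (simp only: sum.distrib sum_subtractf) simp
  moreover have "(8::'a) \<noteq> 0"
  proof -
    have "(8::'a) = 2 * (2 * 2)" by simp
    then show ?thesis using assms(1) by (simp only: mult_eq_0_iff) blast
  qed
  ultimately show ?thesis by simp
qed

lemma sign_sum:
  fixes f :: "nat \<Rightarrow> 'a::comm_ring_1"
  assumes "finite A" "B \<subseteq> A"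
  shows "(\<Sum>j\<in>A. (if j \<in> B then -1 else 1) * f j) = (\<Sum>j\<in>A. f j) - 2 * (\<Sum>j\<in>B. f j)"
proof -
  have "(\<Sum>j\<in>A. (if j \<in> B then -1 else 1) * f j) = (\<Sum>j\<in>A. f j - 2 * (if j \<in> B then f j else 0))"
    by (intro sum.cong refl) auto
  also have "\<dots> = (\<Sum>j\<in>A. f j) - 2 * (\<Sum>j\<in>A \<inter> B. f j)"
    by (simp add: sum_subtractf sum_distrib_left sum.inter_restrict[OF assms(1)])
  finally show ?thesis using assms(2) by (simp add: Int_absorb1)
qed

text \<open>The sign points \<open>R_B = \<Sum>_j \<pm> \<omega>_j^{-1} P_j\<close> (minus signs at \<open>B\<close>), i.e. the
  orbit of \<open>R_{\<emptyset>}\<close> under \<open>Inv(\<S>)\<close>; they are the test points for polarisation.\<close>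
definition sign_point :: "(nat \<Rightarrow> 'a::field) \<Rightarrow> nat set \<Rightarrow> 'a poly" where
  "sign_point \<theta> B = (\<Sum>j\<in>{1..6}. smult ((if j \<in> B then -1 else 1) / omega \<theta> j) (Pj \<theta> j))"

context six_nodes
begin

lemma sign_point_on_S: "sign_point \<theta> B \<in> Scone \<theta>"
proof -
  let ?R = "sign_point \<theta> B"
  have pi: "piC \<theta> ?R j = (if j \<in> B then -1 else 1) / omega \<theta> j" if "j \<in> {1..6}" for j
    unfolding sign_point_def using that by (rule piC_basis_lincomb)
  have V: "?R \<in> V5" unfolding sign_point_def by (intro V5_lincomb Pj_V5)
  have "?R \<noteq> 0"
    using pi[of 1] omega_nonzero[of 1] V5_eq_zero_iff_coords[OF V] by (auto split: if_splits)
  moreover have "diag_form \<theta> (quadric_weight \<theta> k) ?R ?R = 0" if "k < 3" for k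
  proof -
    have "diag_form \<theta> (quadric_weight \<theta> k) ?R ?R = (\<Sum>j\<in>{1..6}. \<theta> j ^ k / omega \<theta> j)"
      unfolding diag_form_def quadric_weight_def
      by (intro sum.cong refl) (simp add: pi omega_nonzero field_simps)
    also have "\<dots> = 0" using that by (intro partial_fractions) simp
    finally show ?thesis .
  qed
  ultimately show ?thesis using V by (simp add: Scone_iff)
qed

lemma diag_form_Pj_right:
  "i \<in> {1..6} \<Longrightarrow> diag_form \<theta> \<phi> U (Pj \<theta> i) = \<phi> i * piC \<theta> U i"
  by (simp add: diag_form_def piC_Pj if_distrib cong: if_cong)

end

section \<open>Linear automorphisms of the surface\<close>

lemma finite_partner_onto:
  assumes "finite S"
    and partner: "\<And>a. a \<in> S \<Longrightarrow> \<exists>b\<in>S. R b a"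
    and unique: "\<And>b a a'. b \<in> S \<Longrightarrow> a \<in> S \<Longrightarrow> a' \<in> S \<Longrightarrow> R b a \<Longrightarrow> R b a' \<Longrightarrow> a = a'"
    and "b \<in> S"
  shows "\<exists>a\<in>S. R b a"
proof -
  define g where "g a = (SOME b. b \<in> S \<and> R b a)" for a
  have g: "g a \<in> S \<and> R (g a) a" if "a \<in> S" for a
    unfolding g_def by (rule someI_ex) (use partner[OF that] in blast)
  have "inj_on g S" by (rule inj_onI) (metis g unique)
  then have "g ` S = S" using g \<open>finite S\<close> by (intro endo_inj_surj) auto
  then show ?thesis using g \<open>b \<in> S\<close> by (metis imageE)
qed

locale S_automorphism = six_nodes \<theta> for \<theta> :: "nat \<Rightarrow> 'a::field" +
  fixes M :: "'a poly \<Rightarrow> 'a poly"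
  assumes GL: "GL_S \<theta> M"
    and two_nonzero: "(2::'a) \<noteq> 0"
begin

lemma M_add: "P \<in> V5 \<Longrightarrow> Q \<in> V5 \<Longrightarrow> M (P + Q) = M P + M Q"
  and M_smult: "P \<in> V5 \<Longrightarrow> M (smult c P) = smult c (M P)"
  and M_bij: "bij_betw M V5 V5"
  and M_Scone: "P \<in> Scone \<theta> \<Longrightarrow> M P \<in> Scone \<theta>"
  using GL unfolding GL_S_def by auto

lemma M_V5: "P \<in> V5 \<Longrightarrow> M P \<in> V5"
  using M_bij by (auto simp: bij_betw_def)

lemma M_inj: "P \<in> V5 \<Longrightarrow> Q \<in> V5 \<Longrightarrow> M P = M Q \<Longrightarrow> P = Q"
  using M_bij by (auto simp: bij_betw_def inj_on_def)

lemma M_surj: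
  assumes "R \<in> V5"
  shows "\<exists>Q\<in>V5. M Q = R"
proof -
  have "R \<in> M ` V5" using M_bij assms by (simp add: bij_betw_def)
  then show ?thesis by blast
qed

lemma M_zero: "M 0 = 0"
  using M_smult[of 0 0] by (simp add: V5_def)

lemma M_lincomb:
  assumes "finite J" "\<And>j. j \<in> J \<Longrightarrow> Q j \<in> V5"
  shows "M (\<Sum>j\<in>J. smult (c j) (Q j)) = (\<Sum>j\<in>J. smult (c j) (M (Q j)))"
  using assms
proof (induction J rule: finite_induct)
  case empty
  then show ?case by (simp add: M_zero)
next
  case (insert x J)
  have "smult (c x) (Q x) \<in> V5" "(\<Sum>j\<in>J. smult (c j) (Q j)) \<in> V5"
    using insert.prems by (auto intro: V5_smult V5_lincomb)
  then show ?case using insert by (simp add: M_add M_smult)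
qed

lemma M_expand: "Q \<in> V5 \<Longrightarrow> M Q = (\<Sum>j\<in>{1..6}. smult (piC \<theta> Q j) (M (Pj \<theta> j)))"
  by (subst lagrange, assumption) (intro M_lincomb Pj_V5, auto)

lemma M_Pj_nonzero:
  assumes "i \<in> {1..6}"
  shows "M (Pj \<theta> i) \<noteq> 0"
proof
  assume "M (Pj \<theta> i) = 0"
  then have "Pj \<theta> i = 0"
    using M_inj[OF Pj_V5[OF assms], of 0] M_zero by (simp add: V5_def)
  then show False using piC_Pj[OF assms assms] by (simp add: piC_zero)
qed

lemma piC_image_sign_point:
  assumes "B \<subseteq> {1..6}"
  shows "piC \<theta> (M (sign_point \<theta> B)) i =
    (\<Sum>j\<in>{1..6}. piC \<theta> (M (Pj \<theta> j)) i / omega \<theta> j)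
      - 2 * (\<Sum>j\<in>B. piC \<theta> (M (Pj \<theta> j)) i / omega \<theta> j)"
proof -
  have "M (sign_point \<theta> B) =
      (\<Sum>j\<in>{1..6}. smult ((if j \<in> B then -1 else 1) / omega \<theta> j) (M (Pj \<theta> j)))"
    unfolding sign_point_def by (rule M_lincomb) (auto intro: Pj_V5)
  then have "piC \<theta> (M (sign_point \<theta> B)) i =
      (\<Sum>j\<in>{1..6}. (if j \<in> B then -1 else 1) * (piC \<theta> (M (Pj \<theta> j)) i / omega \<theta> j))"
    by (simp add: piC_lincomb)
  also have "\<dots> = (\<Sum>j\<in>{1..6}. piC \<theta> (M (Pj \<theta> j)) i / omega \<theta> j)
      - 2 * (\<Sum>j\<in>B. piC \<theta> (M (Pj \<theta> j)) i / omega \<theta> j)"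
    by (rule sign_sum[OF _ assms]) simp
  finally show ?thesis .
qed

lemma image_sign_point_quadric:
  assumes "B \<subseteq> {1..6}" "k < 3"
  shows "(\<Sum>i\<in>{1..6}. quadric_weight \<theta> k i *
     ((\<Sum>j\<in>{1..6}. piC \<theta> (M (Pj \<theta> j)) i / omega \<theta> j)
       - 2 * (\<Sum>j\<in>B. piC \<theta> (M (Pj \<theta> j)) i / omega \<theta> j))^2) = 0"
proof -
  have "M (sign_point \<theta> B) \<in> Scone \<theta>" by (intro M_Scone sign_point_on_S)
  then have "diag_form \<theta> (quadric_weight \<theta> k) (M (sign_point \<theta> B)) (M (sign_point \<theta> B)) = 0"
    using assms(2) by (simp add: Scone_iff)
  then show ?thesis
    by (simp add: diag_form_def piC_image_sign_point[OF assms(1)] power2_eq_square mult.assoc)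
qed

lemma images_orthogonal:
  assumes j: "j \<in> {1..6}" and l: "l \<in> {1..6}" and "j \<noteq> l" and k: "k < 3"
  shows "diag_form \<theta> (quadric_weight \<theta> k) (M (Pj \<theta> j)) (M (Pj \<theta> l)) = 0"
proof -
  define w where "w i j = piC \<theta> (M (Pj \<theta> j)) i / omega \<theta> j" for i j
  have quadric: "(\<Sum>i\<in>{1..6}. quadric_weight \<theta> k i *
      ((\<Sum>j\<in>{1..6}. w i j) - 2 * (\<Sum>j\<in>B. w i j))^2) = 0" if "B \<subseteq> {1..6}" for B
    using image_sign_point_quadric[OF that k] by (simp add: w_def)
  have "(\<Sum>i\<in>{1..6}. quadric_weight \<theta> k i * w i j * w i l) = 0"
    by (rule polarization[OF two_nonzero])
       (use quadric[of "{}"] quadric[of "{j}"] quadric[of "{l}"] quadric[of "{j, l}"]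
          j l \<open>j \<noteq> l\<close> in simp_all)
  then have "(\<Sum>i\<in>{1..6}. quadric_weight \<theta> k i * piC \<theta> (M (Pj \<theta> j)) i * piC \<theta> (M (Pj \<theta> l)) i)
      / (omega \<theta> j * omega \<theta> l) = 0"
    by (simp add: w_def sum_divide_distrib)
  then show ?thesis
    using omega_nonzero[OF j] omega_nonzero[OF l] by (simp add: diag_form_def)
qed

text \<open>The pencil form \<open>\<beta>_1 - \<theta>_a \<beta>_0\<close>, whose radical is the line spanned by \<open>P_a\<close>.\<close>
definition pencil_weight :: "nat \<Rightarrow> nat \<Rightarrow> 'a" where
  "pencil_weight a i = omega \<theta> i * (\<theta> i - \<theta> a)"

lemma pencil_orthogonal:
  assumes "j \<in> {1..6}" "l \<in> {1..6}" "j \<noteq> l"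
  shows "diag_form \<theta> (pencil_weight a) (M (Pj \<theta> j)) (M (Pj \<theta> l)) = 0"
proof -
  have "diag_form \<theta> (pencil_weight a) (M (Pj \<theta> j)) (M (Pj \<theta> l)) =
      diag_form \<theta> (quadric_weight \<theta> 1) (M (Pj \<theta> j)) (M (Pj \<theta> l))
      - \<theta> a * diag_form \<theta> (quadric_weight \<theta> 0) (M (Pj \<theta> j)) (M (Pj \<theta> l))"
    by (simp add: diag_form_def pencil_weight_def quadric_weight_def sum_distrib_left
        sum_subtractf[symmetric] algebra_simps)
  then show ?thesis using images_orthogonal[OF assms] by simp
qed

lemma orthogonal_to_images:
  assumes "\<And>l. l \<in> {1..6} \<Longrightarrow> diag_form \<theta> \<phi> U (M (Pj \<theta> l)) = 0" and "R \<in> V5"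
  shows "diag_form \<theta> \<phi> U R = 0"
proof -
  obtain Q where "Q \<in> V5" "M Q = R" using M_surj[OF assms(2)] by blast
  then have "R = (\<Sum>l\<in>{1..6}. smult (piC \<theta> Q l) (M (Pj \<theta> l)))" using M_expand by blast
  then have "diag_form \<theta> \<phi> U R = (\<Sum>l\<in>{1..6}. piC \<theta> Q l * diag_form \<theta> \<phi> U (M (Pj \<theta> l)))"
    by (simp add: diag_form_lincomb_right)
  then show ?thesis using assms(1) by simp
qed

lemma basis_line_preimage:
  assumes a: "a \<in> {1..6}"
  shows "\<exists>b\<in>{1..6}. \<exists>c. c \<noteq> 0 \<and> M (Pj \<theta> b) = smult c (Pj \<theta> a)"
proof -
  let ?\<beta> = "diag_form \<theta> (pencil_weight a)"
  have radical: "?\<beta> U (Pj \<theta> a) = 0" for U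
    using a by (simp add: diag_form_Pj_right pencil_weight_def)
  obtain Q where Q: "Q \<in> V5" "M Q = Pj \<theta> a" using M_surj[OF Pj_V5[OF a]] by blast
  have expand: "Pj \<theta> a = (\<Sum>j\<in>{1..6}. smult (piC \<theta> Q j) (M (Pj \<theta> j)))"
    using M_expand[OF Q(1)] Q(2) by simp
  have self: "piC \<theta> Q l * ?\<beta> (M (Pj \<theta> l)) (M (Pj \<theta> l)) = 0" if l: "l \<in> {1..6}" for l
  proof -
    have "?\<beta> (M (Pj \<theta> l)) (Pj \<theta> a) =
        (\<Sum>j\<in>{1..6}. piC \<theta> Q j * ?\<beta> (M (Pj \<theta> l)) (M (Pj \<theta> j)))"
      unfolding expand by (rule diag_form_lincomb_right)
    also have "\<dots> = (\<Sum>j\<in>{1..6}. if j = l then piC \<theta> Q l * ?\<beta> (M (Pj \<theta> l)) (M (Pj \<theta> l)) else 0)"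
      using l by (intro sum.cong refl) (auto simp: pencil_orthogonal)
    finally show ?thesis using l radical by simp
  qed
  have "Q \<noteq> 0" using Q M_Pj_nonzero[OF a] M_zero by auto
  then obtain b where b: "b \<in> {1..6}" "piC \<theta> Q b \<noteq> 0"
    using V5_eq_zero_iff_coords[OF Q(1)] by blast
  let ?U = "M (Pj \<theta> b)"
  have "?\<beta> ?U (M (Pj \<theta> l)) = 0" if "l \<in> {1..6}" for l
    using self[OF b(1)] b pencil_orthogonal[OF b(1) that] by (cases "l = b") auto
  then have "?\<beta> ?U (Pj \<theta> i) = 0" if "i \<in> {1..6}" for i
    using orthogonal_to_images Pj_V5[OF that] by blast
  then have "piC \<theta> ?U i = 0" if "i \<in> {1..6}" "i \<noteq> a" for i
    using that omega_nonzero[OF that(1)] inj_onD[OF nodes_inj, of i a] a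
    by (auto simp: diag_form_Pj_right pencil_weight_def)
  then have "?U = smult (piC \<theta> ?U a) (Pj \<theta> a)"
    using supported_at_node M_V5[OF Pj_V5[OF b(1)]] a by blast
  moreover have "piC \<theta> ?U a \<noteq> 0"
    using calculation M_Pj_nonzero[OF b(1)] by (metis smult_0_left)
  ultimately show ?thesis using b(1) by blast
qed

lemma basis_line_images_distinct:
  assumes "i \<in> {1..6}" "j \<in> {1..6}" "i \<noteq> j" "a \<in> {1..6}"
    and "M (Pj \<theta> i) = smult c (Pj \<theta> a)" "M (Pj \<theta> j) = smult c' (Pj \<theta> a)" "c \<noteq> 0"
  shows False
proof -
  have "M (smult c' (Pj \<theta> i)) = smult (c' * c) (Pj \<theta> a)"
    using M_smult[OF Pj_V5[OF assms(1)]] assms(5) by simp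
  moreover have "M (smult c (Pj \<theta> j)) = smult (c' * c) (Pj \<theta> a)"
    using M_smult[OF Pj_V5[OF assms(2)]] assms(6) by (simp add: mult.commute)
  ultimately have "M (smult c' (Pj \<theta> i)) = M (smult c (Pj \<theta> j))" by simp
  then have "smult c' (Pj \<theta> i) = smult c (Pj \<theta> j)"
    using M_inj V5_smult Pj_V5 assms(1,2) by blast
  then have "piC \<theta> (smult c' (Pj \<theta> i)) j = piC \<theta> (smult c (Pj \<theta> j)) j" by simp
  then show False using assms(1-3,7) by (simp add: piC_smult piC_Pj)
qed

lemma basis_line_image:
  assumes "i \<in> {1..6}"
  shows "\<exists>a\<in>{1..6}. \<exists>c. c \<noteq> 0 \<and> M (Pj \<theta> i) = smult c (Pj \<theta> a)"
proof (rule finite_partner_onto[OF _ basis_line_preimage _ assms])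
  fix b a a' assume "a \<in> {1..6}" "a' \<in> {1..6}"
    and "\<exists>c. c \<noteq> 0 \<and> M (Pj \<theta> b) = smult c (Pj \<theta> a)"
    and "\<exists>c. c \<noteq> 0 \<and> M (Pj \<theta> b) = smult c (Pj \<theta> a')"
  then obtain c c' where "c \<noteq> 0" "smult c (Pj \<theta> a) = smult c' (Pj \<theta> a')" by metis
  then have "c * piC \<theta> (Pj \<theta> a) a = c' * piC \<theta> (Pj \<theta> a') a" by (metis piC_smult)
  with \<open>c \<noteq> 0\<close> show "a = a'" using \<open>a \<in> _\<close> \<open>a' \<in> _\<close> by (auto simp: piC_Pj split: if_splits)
qed simp

lemma piC_transport:
  assumes i: "i \<in> {1..6}" and a: "a \<in> {1..6}" and Mi: "M (Pj \<theta> i) = smult c (Pj \<theta> a)"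
    and "c \<noteq> 0" and "Q \<in> V5"
  shows "piC \<theta> (M Q) a = c * piC \<theta> Q i"
proof -
  have column: "piC \<theta> (M (Pj \<theta> j)) a = (if j = i then c else 0)" if j: "j \<in> {1..6}" for j
  proof (cases "j = i")
    case True
    then show ?thesis using Mi a by (simp add: piC_smult piC_Pj)
  next
    case False
    obtain a' c' where a': "a' \<in> {1..6}" "M (Pj \<theta> j) = smult c' (Pj \<theta> a')"
      using basis_line_image[OF j] by blast
    have "a' \<noteq> a" using basis_line_images_distinct[OF i j] False Mi a' \<open>c \<noteq> 0\<close> by metis
    then show ?thesis using False a a' by (simp add: piC_smult piC_Pj)
  qed
  have "piC \<theta> (M Q) a = (\<Sum>j\<in>{1..6}. piC \<theta> Q j * piC \<theta> (M (Pj \<theta> j)) a)"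
    using \<open>Q \<in> V5\<close> by (simp add: M_expand piC_lincomb)
  also have "\<dots> = c * piC \<theta> Q i" using i by (simp add: column if_distrib mult.commute cong: if_cong)
  finally show ?thesis .
qed

lemma eps_conjugation:
  assumes i: "i \<in> {1..6}" and a: "a \<in> {1..6}" and Mi: "M (Pj \<theta> i) = smult c (Pj \<theta> a)"
    and "c \<noteq> 0" and P: "P \<in> V5"
  shows "M (eps \<theta> i P) = eps \<theta> a (M P)"
proof -
  have eps_i: "eps \<theta> i P = P + smult (- 2 * piC \<theta> P i) (Pj \<theta> i)"
    by (simp add: eps_def epsI_def)
  have "M (eps \<theta> i P) = M P + M (smult (- 2 * piC \<theta> P i) (Pj \<theta> i))"
    unfolding eps_i by (rule M_add[OF P V5_smult[OF Pj_V5[OF i]]])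
  also have "\<dots> = M P + smult (- 2 * piC \<theta> P i * c) (Pj \<theta> a)"
    using Mi by (subst M_smult[OF Pj_V5[OF i]]) simp
  also have "\<dots> = eps \<theta> a (M P)"
    by (simp add: eps_def epsI_def piC_transport[OF assms] mult_ac)
  finally show ?thesis .
qed

text \<open>The node \<open>a\<close> with \<open>M P_i \<sim> P_a\<close> is recognised from the image of the point
  \<open>p_i = X - \<theta>_i\<close>, the only point of \<open>\<Delta>_0\<close> with \<open>\<pi>_i = 0\<close>.\<close>
lemma node_from_point_image:
  assumes i: "i \<in> {1..6}" and a: "a \<in> {1..6}" and Mi: "M (Pj \<theta> i) = smult c (Pj \<theta> a)"
    and "c \<noteq> 0" and I: "I \<subseteq> {1..6}" and b: "b \<in> {1..6}" and "k \<noteq> 0"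
    and image: "epsI \<theta> I (M [:- \<theta> i, 1:]) = smult k [:- \<theta> b, 1:]"
  shows "a = b"
proof -
  have "piC \<theta> (M [:- \<theta> i, 1:]) a = 0"
    using piC_transport[OF i a Mi \<open>c \<noteq> 0\<close>, of "[:- \<theta> i, 1:]"] by (simp add: V5_def piC_def)
  then have "piC \<theta> (epsI \<theta> I (M [:- \<theta> i, 1:])) a = 0"
    using piC_epsI[OF I a] by simp
  then have "piC \<theta> (smult k [:- \<theta> b, 1:]) a = 0"
    unfolding image .
  then have "\<theta> a = \<theta> b" using \<open>k \<noteq> 0\<close> omega_nonzero[OF a] by (simp add: piC_def)
  then show ?thesis using inj_onD[OF nodes_inj _ a b] by simp
qed

end

text \<open>In fact the identity holds exactly
  on all of \<open>V5\<close>, not only up to scalars.\<close>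
theorem mainTheorem9:
  fixes F :: "'a::field poly" and \<theta> :: "nat \<Rightarrow> 'a"
    and M :: "'a poly \<Rightarrow> 'a poly" and I :: "nat set" and \<sigma> :: "nat \<Rightarrow> nat"
  assumes alg_closed: "\<forall>p::'a poly. degree p \<ge> 1 \<longrightarrow> (\<exists>x. poly p x = 0)"
    and char_not_2: "(2::'a) \<noteq> 0"
    and degF: "degree F = 6"
    and roots: "bij_betw \<theta> {1..6} {x. poly F x = 0}"
    and A: "GL_S \<theta> M"
    and epsA: "I \<subseteq> {1..6}" "(epsI \<theta> I \<circ> M) ` Delta0 = Delta0"
    and sigma: "\<sigma> permutes {1..6}"
    "\<forall>i\<in>{1..6}. proj_eq (epsI \<theta> I (M [:- \<theta> i, 1:])) [:- \<theta> (\<sigma> i), 1:]"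
  shows "\<forall>i\<in>{1..6}. \<forall>P\<in>Scone \<theta>. proj_eq (M (eps \<theta> i P)) (eps \<theta> (\<sigma> i) (M P))"
proof (intro ballI)
  interpret S_automorphism \<theta> M
    using roots A char_not_2 by unfold_locales (simp_all add: bij_betw_def)
  fix i :: nat and P assume i: "i \<in> {1..6}" and "P \<in> Scone \<theta>"
  then have P: "P \<in> V5" by (simp add: Scone_iff)
  obtain a c where a: "a \<in> {1..6}" "c \<noteq> 0" "M (Pj \<theta> i) = smult c (Pj \<theta> a)"
    using basis_line_image[OF i] by blast
  obtain k where k: "k \<noteq> 0" "epsI \<theta> I (M [:- \<theta> i, 1:]) = smult k [:- \<theta> (\<sigma> i), 1:]"
    using sigma(2) i unfolding proj_eq_def by blast
  have "\<sigma> i \<in> {1..6}" using permutes_in_image[OF sigma(1)] i by simp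
  then have "a = \<sigma> i" using node_from_point_image[OF i a(1,3,2) epsA(1) _ k] by blast
  then have "M (eps \<theta> i P) = eps \<theta> (\<sigma> i) (M P)" using eps_conjugation[OF i a(1,3,2) P] by simp
  then show "proj_eq (M (eps \<theta> i P)) (eps \<theta> (\<sigma> i) (M P))"
    unfolding proj_eq_def by (intro exI[of _ 1]) simp
qed

end
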